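(* Let $n$ be any positive integer. There exists a 1-layer transformer, with a suitable position embedding, that performs function evaluation for domain $[n]$ in the "consecutive positions, ordered keys" presentation. That is, for every function $f:[n]\to[n]$ and every target key $i^*\in[n]$, on the input sequence $0,f(0),1,f(1),\dots,n-1,f(n-1),i^*$ of length $2n+1$ (position $2i$ holds $i$, position $2i+1$ holds $f(i)$, position $2n$ holds $i^*$), it outputs $f(i^* )$. The transformer uses leftmost hard attention, one attention head, embedding dimension $4$, $O(\log n)$ bits of precision, no residual connections, and no MLP layer.
   Context: Notation: $[n]=\{0,1,\dots,n-1\}$. Transformer model (encoder-only, no masking, no layer normalization). A transformer of embedding dimension $d$ consists of three parts. - An input embedding maps an input sequence $x_0,\dots,x_{L-1}$ to vectors $\mathbf{e}(x_i)=\mathbf{w}(x_i)+\mathbf{p}(i)\in\mathbb{R}^d$. Here $\mathbf{w}$ is the token embedding and $\mathbf{p}$ is the position embedding, which may be chosen freely. - A sequence of length-preserving layers follows. - An output map comes last. Given an unembedding matrix $\mathbf{U}\in\mathbb{R}^{n\times d}$, the output is the index $i\in[n]$ maximizing $(\mathbf{U}\mathbf{Y}[L-1])_i$, where $\mathbf{Y}$ is the final layer's output sequence. A single-head attention layer has matrices $\mathbf{W}^Q,\mathbf{W}^K\in\mathbb{R}^{d_{hid}\times d}$ and $\mathbf{W}^V\in\mathbb{R}^{d\times d}$. It computes the scores $s[i,j]=(\mathbf{W}^Q\mathbf{X}[i])\cdot(\mathbf{W}^K\mathbf{X}[j])/\sqrt{d_{hid}}$, and outputs $\mathbf{Y}[i]=\sum_j\alpha[i,j]\mathbf{W}^V\mathbf{X}[j]$.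 - In leftmost hard attention, $\alpha[i,j]=1$ for the smallest $j$ maximizing $s[i,j]$, and $\alpha[i,j]=0$ otherwise. - With residuals the output is $\mathbf{X}[i]+\sum_j\alpha[i,j]\mathbf{W}^V\mathbf{X}[j]$. An MLP layer applies a 2-layer ReLU network position-wise. A $k$-layer transformer has $k$ attention layers and any number of MLP layers. *)

theory Defs
  imports "HOL-Analysis.Analysis"
begin

text \<open>W^Q, W^K are d_hid x 4 matrices given by their rows (row r, for r < dh);
  W^V is a 4 x 4 matrix; the unembedding U is an n x 4 matrix given by rows.\<close>

definition att_score ::
  "nat \<Rightarrow> (nat \<Rightarrow> real^4) \<Rightarrow> (nat \<Rightarrow> real^4) \<Rightarrow> real^4 \<Rightarrow> real^4 \<Rightarrow> real" where
  "att_score dh WQ WK x y =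
     (\<Sum>r<dh. (WQ r \<bullet> x) * (WK r \<bullet> y)) / sqrt (real dh)"

definition hard_attn_layer ::
  "nat \<Rightarrow> (nat \<Rightarrow> real^4) \<Rightarrow> (nat \<Rightarrow> real^4) \<Rightarrow> real^4^4 \<Rightarrow> (nat \<Rightarrow> real^4)
     \<Rightarrow> nat \<Rightarrow> nat \<Rightarrow> real^4" where
  "hard_attn_layer dh WQ WK WV X L i =
     WV *v X (LEAST j. j < L \<and>
       (\<forall>k<L. att_score dh WQ WK (X i) (X k) \<le> att_score dh WQ WK (X i) (X j)))"

definition tf1_outputs ::
  "nat \<Rightarrow> (nat \<Rightarrow> real^4) \<Rightarrow> (nat \<Rightarrow> real^4) \<Rightarrow> nat \<Rightarrow> (nat \<Rightarrow> real^4) \<Rightarrow> (nat \<Rightarrow> real^4)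
     \<Rightarrow> real^4^4 \<Rightarrow> (nat \<Rightarrow> real^4) \<Rightarrow> nat list \<Rightarrow> nat \<Rightarrow> bool" where
  "tf1_outputs n w p dh WQ WK WV U xs out \<longleftrightarrow>
     (let L = length xs;
          X = (\<lambda>i. w (xs ! i) + p i);
          y = hard_attn_layer dh WQ WK WV X L (L - 1)
      in out < n \<and> (\<forall>k<n. k \<noteq> out \<longrightarrow> U k \<bullet> y < U out \<bullet> y))"

definition fe_input :: "nat \<Rightarrow> (nat \<Rightarrow> nat) \<Rightarrow> nat \<Rightarrow> nat list" where
  "fe_input n f istar = concat (map (\<lambda>i. [i, f i]) [0..<n]) @ [istar]"

text \<open>Precision: all entries are integers of absolute value at most B.\<close>
definition int_vec_bounded :: "real \<Rightarrow> real^4 \<Rightarrow> bool" where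
  "int_vec_bounded B v \<longleftrightarrow> (\<forall>k. v $ k \<in> \<int> \<and> \<bar>v $ k\<bar> \<le> B)"

end

theory Submission
  imports Defs
begin

text \<open>Coordinate 1 carries the token, coordinate 2 is the constant 1, and the position
  embedding gives the value position \<open>2j+1\<close> the key \<open>(j, -j\<^sup>2)\<close> in coordinates 3 and 4.
  The query at the last position, holding \<open>i*\<close>, then scores position \<open>2j+1\<close> by
  \<open>2 i* j - j\<^sup>2 = i*\<^sup>2 - (j - i*)\<^sup>2\<close>, which peaks exactly at \<open>j = i*\<close>; even positions get
  the score \<open>-(n\<^sup>2 + 1) < 0\<close>. So attention copies the token \<open>f(i*)\<close> of position \<open>2i*+1\<close>
  together with the constant 1, and the unembedding row \<open>(2k, -k\<^sup>2)\<close> recovers \<open>f(i*)\<close>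
  by the same completion of squares. All entries are integers of size at most \<open>2(n+1)\<^sup>2\<close>.\<close>

lemma square_completion_less:
  fixes a b :: real
  assumes "b \<noteq> a"
  shows "2 * a * b - b\<^sup>2 < a\<^sup>2"
proof -
  have "0 < (b - a)\<^sup>2" using assms by simp
  then show ?thesis by (simp add: power2_eq_square algebra_simps)
qed

definition vec4 :: "real \<Rightarrow> real \<Rightarrow> real \<Rightarrow> real \<Rightarrow> real^4" where
  "vec4 a b c d = (\<chi> k. if k = 1 then a else if k = 2 then b else if k = 3 then c else d)"

lemma vec4_nth [simp]:
  "vec4 a b c d $ 1 = a" "vec4 a b c d $ 2 = b" "vec4 a b c d $ 3 = c" "vec4 a b c d $ 4 = d"
  by (simp_all add: vec4_def)

lemma inner_real4: "(x::real^4) \<bullet> y = x$1 * y$1 + x$2 * y$2 + x$3 * y$3 + x$4 * y$4"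
  by (simp add: inner_vec_def sum_4)

lemma matrix_vector_mult_real4:
  "((A::real^4^4) *v x) $ i = A$i$1 * x$1 + A$i$2 * x$2 + A$i$3 * x$3 + A$i$4 * x$4"
  by (simp add: matrix_vector_mult_def sum_4)

lemma int_vec_bounded_vec4:
  "int_vec_bounded B (vec4 a b c d) \<longleftrightarrow>
     a \<in> \<int> \<and> b \<in> \<int> \<and> c \<in> \<int> \<and> d \<in> \<int> \<and> \<bar>a\<bar> \<le> B \<and> \<bar>b\<bar> \<le> B \<and> \<bar>c\<bar> \<le> B \<and> \<bar>d\<bar> \<le> B"
  unfolding int_vec_bounded_def forall_4 by auto

lemma hard_attn_layer_unique_argmax:
  assumes "j < L"
    and "\<And>k. k < L \<Longrightarrow> k \<noteq> j \<Longrightarrow> att_score dh WQ WK (X i) (X k) < att_score dh WQ WK (X i) (X j)"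
  shows "hard_attn_layer dh WQ WK WV X L i = WV *v X j"
proof -
  have "(LEAST j'. j' < L \<and>
          (\<forall>k<L. att_score dh WQ WK (X i) (X k) \<le> att_score dh WQ WK (X i) (X j'))) = j"
  proof (rule Least_equality)
    show "j < L \<and> (\<forall>k<L. att_score dh WQ WK (X i) (X k) \<le> att_score dh WQ WK (X i) (X j))"
      using assms by (metis order.order_iff_strict)
  next
    fix j'
    assume "j' < L \<and> (\<forall>k<L. att_score dh WQ WK (X i) (X k) \<le> att_score dh WQ WK (X i) (X j'))"
    then show "j \<le> j'" using assms by (metis linorder_not_less nat_neq_iff)
  qed
  then show ?thesis by (simp add: hard_attn_layer_def)
qed

lemma length_fe_pairs: "length (concat (map (\<lambda>i. [i, f i]) [0..<n])) = 2 * n"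
  by (induction n) auto

lemma nth_fe_pairs:
  "k < 2 * n \<Longrightarrow>
     concat (map (\<lambda>i. [i, f i]) [0..<n]) ! k = (if even k then k div 2 else f (k div 2))"
proof (induction n)
  case (Suc n)
  consider "k < 2 * n" | "k = 2 * n" | "k = 2 * n + 1" using Suc.prems by (auto simp: less_Suc_eq)
  then show ?case using Suc by cases (auto simp: nth_append length_fe_pairs)
qed simp

lemma length_fe_input: "length (fe_input n f istar) = 2 * n + 1"
  by (simp add: fe_input_def length_fe_pairs)

lemma nth_fe_input_last: "fe_input n f istar ! (2 * n) = istar"
  by (simp add: fe_input_def nth_append length_fe_pairs)

lemma nth_fe_input_value: "i < n \<Longrightarrow> fe_input n f istar ! (2 * i + 1) = f i"
  by (simp add: fe_input_def nth_append length_fe_pairs nth_fe_pairs)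

definition tok_emb :: "nat \<Rightarrow> real^4" where
  "tok_emb x = vec4 (real x) 0 0 0"

definition pos_emb :: "nat \<Rightarrow> nat \<Rightarrow> real^4" where
  "pos_emb n k =
     (if odd k then vec4 0 1 (real (k div 2)) (- (real (k div 2))\<^sup>2)
      else vec4 0 1 0 (- ((real n)\<^sup>2 + 1)))"

definition query_rows :: "nat \<Rightarrow> real^4" where
  "query_rows r = (if r = 0 then vec4 1 0 0 0 else vec4 0 1 0 0)"

definition key_rows :: "nat \<Rightarrow> real^4" where
  "key_rows r = (if r = 0 then vec4 0 0 2 0 else vec4 0 0 0 1)"

definition value_mat :: "real^4^4" where
  "value_mat = (\<chi> i. if i = 1 then vec4 1 0 0 0 else if i = 2 then vec4 0 1 0 0 else 0)"

definition unembed :: "nat \<Rightarrow> real^4" where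
  "unembed k = vec4 (2 * real k) (- (real k)\<^sup>2) 0 0"

lemma att_score_query_key:
  "att_score 2 query_rows key_rows x y = (2 * x$1 * y$3 + x$2 * y$4) / sqrt 2"
  by (simp add: att_score_def numeral_2_eq_2 query_rows_def key_rows_def inner_real4)

lemma unembed_inner_argmax:
  "k \<noteq> m \<Longrightarrow> unembed k \<bullet> vec4 (real m) 1 0 0 < unembed m \<bullet> vec4 (real m) 1 0 0"
  using square_completion_less[of "real k" "real m"]
  by (simp add: inner_real4 unembed_def power2_eq_square algebra_simps)

theorem tf1_outputs_function_evaluation:
  assumes "\<forall>i<n. f i < n" and "istar < n"
  shows "tf1_outputs n tok_emb (pos_emb n) 2 query_rows key_rows value_mat unembed
           (fe_input n f istar) (f istar)"
proof -
  define X where "X k = tok_emb (fe_input n f istar ! k) + pos_emb n k" for k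
  define score where "score k = att_score 2 query_rows key_rows (X (2 * n)) (X k)" for k
  have score_odd: "score (2 * j + 1) = (2 * real istar * real j - (real j)\<^sup>2) / sqrt 2" for j
    by (simp add: score_def att_score_query_key X_def tok_emb_def pos_emb_def nth_fe_input_last)
  have score_even: "even k \<Longrightarrow> score k = - ((real n)\<^sup>2 + 1) / sqrt 2" for k
    by (simp add: score_def att_score_query_key X_def tok_emb_def pos_emb_def nth_fe_input_last)
  have peak: "score k < score (2 * istar + 1)" if "k \<noteq> 2 * istar + 1" for k
  proof (cases "even k")
    case True
    have "0 \<le> (real n)\<^sup>2" "0 \<le> (real istar)\<^sup>2" by simp_all
    then have "- ((real n)\<^sup>2 + 1) < 2 * real istar * real istar - (real istar)\<^sup>2"
      unfolding power2_eq_square by linarith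
    then show ?thesis unfolding score_even[OF True] score_odd by (simp add: divide_strict_right_mono)
  next
    case False
    then obtain j where k: "k = 2 * j + 1" by (rule oddE)
    with that have "j \<noteq> istar" by auto
    then show ?thesis unfolding k score_odd
      using square_completion_less[of "real j" "real istar"]
      by (simp add: divide_strict_right_mono power2_eq_square)
  qed
  have "hard_attn_layer 2 query_rows key_rows value_mat X (2 * n + 1) (2 * n) =
        value_mat *v X (2 * istar + 1)"
    using assms(2) peak unfolding score_def by (intro hard_attn_layer_unique_argmax) auto
  also have "\<dots> = vec4 (real (f istar)) 1 0 0"
    using nth_fe_input_value[OF assms(2)]
    by (simp add: vec_eq_iff forall_4 matrix_vector_mult_real4 value_mat_def X_def tok_emb_def
        pos_emb_def)
  finally show ?thesis
    using assms unembed_inner_argmax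
    by (simp add: tf1_outputs_def length_fe_input X_def[abs_def])
qed

lemma size_bound_of_le:
  assumes "a \<le> n + 1"
  shows "real a \<le> 2 * (real n + 1)\<^sup>2" and "2 * real a \<le> 2 * (real n + 1)\<^sup>2"
    and "(real a)\<^sup>2 \<le> 2 * (real n + 1)\<^sup>2"
proof -
  have a: "real a \<le> real n + 1" using assms by simp
  also have "\<dots> \<le> (real n + 1)\<^sup>2" using power_increasing[of 1 2 "real n + 1"] by simp
  finally show "real a \<le> 2 * (real n + 1)\<^sup>2" "2 * real a \<le> 2 * (real n + 1)\<^sup>2" by simp_all
  have "(real a)\<^sup>2 \<le> (real n + 1)\<^sup>2" using a by (intro power_mono) auto
  then show "(real a)\<^sup>2 \<le> 2 * (real n + 1)\<^sup>2" using zero_le_power2[of "real a"] by linarith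
qed

lemma int_vec_bounded_tok_emb: "x < n \<Longrightarrow> int_vec_bounded (2 * (real n + 1)\<^sup>2) (tok_emb x)"
  using size_bound_of_le(1)[of x n] size_bound_of_le(1)[of 1 n]
  by (simp add: tok_emb_def int_vec_bounded_vec4)

lemma int_vec_bounded_pos_emb:
  assumes "k < 2 * n + 1"
  shows "int_vec_bounded (2 * (real n + 1)\<^sup>2) (pos_emb n k)"
proof -
  have "k div 2 \<le> n + 1" using assms by simp
  moreover have "\<bar>- ((real n)\<^sup>2 + 1)\<bar> \<le> 2 * (real n + 1)\<^sup>2"
    unfolding abs_minus_cancel by (simp add: power2_sum)
  ultimately show ?thesis
    using size_bound_of_le[of "k div 2" n] size_bound_of_le(1)[of 1 n]
    by (simp add: pos_emb_def int_vec_bounded_vec4)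
qed

lemma int_vec_bounded_query_rows: "int_vec_bounded (2 * (real n + 1)\<^sup>2) (query_rows r)"
  using size_bound_of_le(1)[of 1 n] by (simp add: query_rows_def int_vec_bounded_vec4)

lemma int_vec_bounded_key_rows: "int_vec_bounded (2 * (real n + 1)\<^sup>2) (key_rows r)"
  using size_bound_of_le(1)[of 1 n] by (simp add: key_rows_def int_vec_bounded_vec4)

lemma int_vec_bounded_value_mat: "int_vec_bounded (2 * (real n + 1)\<^sup>2) (value_mat $ i)"
  using size_bound_of_le(1)[of 1 n]
  by (simp add: value_mat_def int_vec_bounded_vec4) (simp add: int_vec_bounded_def)

lemma int_vec_bounded_unembed: "k < n \<Longrightarrow> int_vec_bounded (2 * (real n + 1)\<^sup>2) (unembed k)"
  using size_bound_of_le[of k n] size_bound_of_le(1)[of 1 n]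
  by (simp add: unembed_def int_vec_bounded_vec4)

theorem theorem3:
  shows "\<exists>C::nat. \<forall>n::nat. n \<ge> 1 \<longrightarrow>
    (\<exists>(w::nat \<Rightarrow> real^4) (p::nat \<Rightarrow> real^4) (dh::nat) (WQ::nat \<Rightarrow> real^4) (WK::nat \<Rightarrow> real^4)
       (WV::real^4^4) (U::nat \<Rightarrow> real^4).
       let B = real C * (real n + 1) ^ C in
       1 \<le> dh \<and> real dh \<le> B \<and>
       (\<forall>x<n. int_vec_bounded B (w x)) \<and>
       (\<forall>i<2*n+1. int_vec_bounded B (p i)) \<and>
       (\<forall>r<dh. int_vec_bounded B (WQ r) \<and> int_vec_bounded B (WK r)) \<and>
       (\<forall>k. int_vec_bounded B (WV $ k)) \<and>
       (\<forall>k<n. int_vec_bounded B (U k)) \<and>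
       (\<forall>(f::nat \<Rightarrow> nat) (istar::nat). (\<forall>i<n. f i < n) \<longrightarrow> istar < n \<longrightarrow>
          tf1_outputs n w p dh WQ WK WV U (fe_input n f istar) (f istar)))"
  apply (rule exI[of _ 2], intro allI impI)
  subgoal for n
    apply (rule exI[of _ tok_emb], rule exI[of _ "pos_emb n"], rule exI[of _ 2],
        rule exI[of _ query_rows], rule exI[of _ key_rows], rule exI[of _ value_mat],
        rule exI[of _ unembed])
    using size_bound_of_le(1)[of 2 n]
    by (simp add: Let_def tf1_outputs_function_evaluation int_vec_bounded_tok_emb
        int_vec_bounded_pos_emb int_vec_bounded_query_rows int_vec_bounded_key_rows
        int_vec_bounded_value_mat int_vec_bounded_unembed)
  done

end
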